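(* For $n\ge3$, the priority lattice $\Pi(n)$ is not self-dual (it is not isomorphic to its order dual).
   Context: $[n]_0=\{0,\dots,n\}$. A priority forest on $[n]_0$ is a rooted forest with vertex set $[n]_0$ whose component trees $T_0,T_1,\dots$ are increasing (each non-root vertex has a larger label than its parent) and satisfy: for $j<k$ every label of $T_j$ is smaller than every label of $T_k$. The priority lattice $\Pi(n)$ is the set of priority forests on $[n]_0$, ordered by $P\le P'$ iff $E(P)\subseteq E(P')$, together with an extra element $\hat1$ greater than all priority forests. *)

theory Defs
  imports Main
begin

text \<open>A rooted forest on the vertex set {0..n} is represented by its set of edges,
  each edge written as (parent, child).  The forest is determined by its edge set
  (in an increasing tree the root is its minimum vertex).\<close>

definition pf_conn :: "(nat \<times> nat) set \<Rightarrow> nat \<Rightarrow> nat \<Rightarrow> bool" where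
  "pf_conn E x y \<longleftrightarrow> (x, y) \<in> (E \<union> E\<inverse>)\<^sup>*"

definition priority_forest :: "nat \<Rightarrow> (nat \<times> nat) set \<Rightarrow> bool" where
  "priority_forest n E \<longleftrightarrow>
     E \<subseteq> {0..n} \<times> {0..n} \<and>
     (\<forall>(p, c) \<in> E. p < c) \<and>
     (\<forall>p p' c. (p, c) \<in> E \<and> (p', c) \<in> E \<longrightarrow> p = p') \<and>
     (\<forall>x\<in>{0..n}. \<forall>y\<in>{0..n}. \<forall>u\<in>{0..n}. \<forall>v\<in>{0..n}.
        pf_conn E x y \<and> pf_conn E u v \<and> \<not> pf_conn E x u \<and> x < u \<longrightarrow> y < v)"

text \<open>Elements of the priority lattice: Some E for a priority forest E, None for the top.\<close>

definition priority_lattice :: "nat \<Rightarrow> (nat \<times> nat) set option set" where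
  "priority_lattice n = Some ` {E. priority_forest n E} \<union> {None}"

fun pl_le :: "(nat \<times> nat) set option \<Rightarrow> (nat \<times> nat) set option \<Rightarrow> bool" where
  "pl_le _ None = True"
| "pl_le None (Some F) = False"
| "pl_le (Some E) (Some F) = (E \<subseteq> F)"

definition pl_self_dual :: "nat \<Rightarrow> bool" where
  "pl_self_dual n \<longleftrightarrow> (\<exists>f. bij_betw f (priority_lattice n) (priority_lattice n) \<and>
     (\<forall>x\<in>priority_lattice n. \<forall>y\<in>priority_lattice n. pl_le x y \<longleftrightarrow> pl_le (f y) (f x)))"

end

theory Submission
  imports Defs "HOL-Library.FuncSet"
begin

text \<open>An order-reversing bijection of a poset onto itself exchanges atoms and coatoms, so a
  self-dual finite lattice has as many atoms as coatoms.  The atoms of \<Pi>(n) are the n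
  one-edge forests {(p, p + 1)}: every nonempty priority forest contains such an edge.  On the
  other hand every increasing tree on {0..n}, given by a parent function with parent(c) < c
  for 1 \<le> c \<le> n, is a coatom, and there are n! of them.  Since n! > n for n \<ge> 3, \<Pi>(n) is
  not self-dual.\<close>

text \<open>An atom is described without reference to a least element, as an element covering
  exactly one other element; in a poset with a least element this is the usual notion.\<close>

definition atoms :: "'a set \<Rightarrow> ('a \<Rightarrow> 'a \<Rightarrow> bool) \<Rightarrow> 'a set" where
  "atoms L le = {a \<in> L. \<exists>b\<in>L. b \<noteq> a \<and> le b a \<and> (\<forall>c\<in>L. le c a \<longrightarrow> c = a \<or> c = b)}"

definition coatoms :: "'a set \<Rightarrow> ('a \<Rightarrow> 'a \<Rightarrow> bool) \<Rightarrow> 'a set" where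
  "coatoms L le = atoms L (\<lambda>x y. le y x)"

lemma coatom_iff_image_atom:
  assumes bij: "bij_betw \<phi> L M"
    and anti: "\<forall>x\<in>L. \<forall>y\<in>L. le x y \<longleftrightarrow> le' (\<phi> y) (\<phi> x)"
    and "a \<in> L"
  shows "a \<in> coatoms L le \<longleftrightarrow> \<phi> a \<in> atoms M le'"
proof -
  have M: "M = \<phi> ` L" and inj: "inj_on \<phi> L" using bij by (auto simp: bij_betw_def)
  show ?thesis
    using assms(3) anti inj unfolding coatoms_def atoms_def M by (auto simp: inj_on_eq_iff)
qed

lemma bij_betw_coatoms_atoms:
  assumes bij: "bij_betw \<phi> L M"
    and anti: "\<forall>x\<in>L. \<forall>y\<in>L. le x y \<longleftrightarrow> le' (\<phi> y) (\<phi> x)"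
  shows "bij_betw \<phi> (coatoms L le) (atoms M le')"
proof -
  have "\<phi> ` coatoms L le = atoms M le'"
  proof
    show "\<phi> ` coatoms L le \<subseteq> atoms M le'"
      using coatom_iff_image_atom[OF assms] by (auto simp: coatoms_def atoms_def)
    show "atoms M le' \<subseteq> \<phi> ` coatoms L le"
    proof
      fix y assume y: "y \<in> atoms M le'"
      then obtain a where "a \<in> L" "y = \<phi> a"
        using bij by (auto simp: atoms_def bij_betw_def)
      then show "y \<in> \<phi> ` coatoms L le"
        using coatom_iff_image_atom[OF assms] y by blast
    qed
  qed
  moreover have "coatoms L le \<subseteq> L" by (auto simp: coatoms_def atoms_def)
  ultimately show ?thesis
    using bij by (metis bij_betw_subset)
qed

lemma priority_forestD:
  assumes "priority_forest n E"
  shows priority_forest_bounded: "E \<subseteq> {0..n} \<times> {0..n}"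
    and priority_forest_increasing: "\<forall>(p, c) \<in> E. p < c"
    and priority_forest_unique_parent: "\<forall>p p' c. (p, c) \<in> E \<and> (p', c) \<in> E \<longrightarrow> p = p'"
    and priority_forest_priority: "\<forall>x\<in>{0..n}. \<forall>y\<in>{0..n}. \<forall>u\<in>{0..n}. \<forall>v\<in>{0..n}.
        pf_conn E x y \<and> pf_conn E u v \<and> \<not> pf_conn E x u \<and> x < u \<longrightarrow> y < v"
  using assms unfolding priority_forest_def by blast+

lemma pf_conn_sym: "pf_conn E x y \<Longrightarrow> pf_conn E y x"
  unfolding pf_conn_def
  by (metis converse_Un converse_converse rtrancl_converseI sup_commute)

lemma pf_conn_trans: "pf_conn E x y \<Longrightarrow> pf_conn E y z \<Longrightarrow> pf_conn E x z"
  unfolding pf_conn_def by (rule rtrancl_trans)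

lemma rtrancl_increasing_le:
  assumes "\<forall>(p, c) \<in> E. p < (c::nat)" and "(a, b) \<in> E\<^sup>*"
  shows "a \<le> b"
  using assms(2) by induction (use assms(1) in fastforce)+

lemma rtrancl_Un_converse_from_root:
  assumes unique_parent: "\<forall>p p' c. (p, c) \<in> E \<and> (p', c) \<in> E \<longrightarrow> p = p'"
    and root: "\<forall>p. (p, r) \<notin> E" and "(r, x) \<in> (E \<union> E\<inverse>)\<^sup>*"
  shows "(r, x) \<in> E\<^sup>*"
  using assms(3)
proof (induction rule: rtrancl_induct)
  case base
  then show ?case by simp
next
  case (step x y)
  show ?case
  proof (cases "(x, y) \<in> E")
    case True
    then show ?thesis using step.IH by (rule rtrancl_into_rtrancl[rotated])
  next
    case False
    then have yx: "(y, x) \<in> E" using step.hyps(2) by blast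
    from step.IH show ?thesis
    proof (cases rule: rtranclE)
      case base
      then show ?thesis using root yx by auto
    next
      case (step z)
      then have "z = y" using unique_parent yx by blast
      then show ?thesis using step by simp
    qed
  qed
qed

lemma priority_forest_consecutive_edge:
  assumes pf: "priority_forest n E" and "E \<noteq> {}"
  obtains p where "p < n" "(p, Suc p) \<in> E"
proof -
  note increasing = priority_forest_increasing[OF pf]
  define p where "p = (LEAST p. \<exists>c. (p, c) \<in> E)"
  have "\<exists>c. (p, c) \<in> E"
    unfolding p_def by (rule LeastI_ex) (use \<open>E \<noteq> {}\<close> in auto)
  then obtain c where pc: "(p, c) \<in> E" ..
  have p_least: "p \<le> q" if "(q, d) \<in> E" for q d
    unfolding p_def by (rule Least_le) (use that in blast)
  have "p < c" using pc increasing by blast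
  have "c \<le> n" using pc priority_forest_bounded[OF pf] by auto
  have "\<exists>q. (q, Suc p) \<in> E"
  proof (rule ccontr)
    assume root: "\<not> ?thesis"
    then have "Suc p < c" using pc \<open>p < c\<close> Suc_lessI by blast
    have "pf_conn E p (Suc p)"
    proof (rule ccontr)
      assume "\<not> pf_conn E p (Suc p)"
      moreover have "pf_conn E p c" "pf_conn E (Suc p) (Suc p)"
        using pc unfolding pf_conn_def by auto
      ultimately have "c < Suc p"
        using priority_forest_priority[OF pf, rule_format, of p c "Suc p" "Suc p"]
          \<open>Suc p < c\<close> \<open>c \<le> n\<close> by simp
      then show False using \<open>Suc p < c\<close> by simp
    qed
    then have "(Suc p, p) \<in> (E \<union> E\<inverse>)\<^sup>*"
      using pf_conn_sym unfolding pf_conn_def by simp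
    then have "(Suc p, p) \<in> E\<^sup>*"
      using root by (intro rtrancl_Un_converse_from_root[OF priority_forest_unique_parent[OF pf]]) auto
    then show False using rtrancl_increasing_le[OF increasing] by (meson Suc_n_not_le_n)
  qed
  then obtain q where q: "(q, Suc p) \<in> E" ..
  moreover have "q < Suc p" using q increasing by blast
  ultimately have "q = p" using p_least[OF q] by simp
  then show thesis using q \<open>p < c\<close> \<open>c \<le> n\<close> by (intro that) auto
qed

lemma pf_conn_single_edge:
  "pf_conn {(p, Suc p)} x y \<longleftrightarrow> x = y \<or> (x = p \<and> y = Suc p) \<or> (x = Suc p \<and> y = p)"
proof
  assume "pf_conn {(p, Suc p)} x y"
  then show "x = y \<or> (x = p \<and> y = Suc p) \<or> (x = Suc p \<and> y = p)"
    unfolding pf_conn_def by (induction rule: rtrancl_induct) auto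
qed (auto simp: pf_conn_def)

lemma priority_forest_single_edge: "p < n \<Longrightarrow> priority_forest n {(p, Suc p)}"
  unfolding priority_forest_def pf_conn_single_edge by auto

lemma priority_forest_empty: "priority_forest n {}"
  unfolding priority_forest_def pf_conn_def by auto

lemma Some_in_priority_lattice_iff: "Some E \<in> priority_lattice n \<longleftrightarrow> priority_forest n E"
  unfolding priority_lattice_def by auto

lemma None_in_priority_lattice: "None \<in> priority_lattice n"
  unfolding priority_lattice_def by auto

lemma atoms_priority_lattice:
  assumes "0 < n"
  shows "atoms (priority_lattice n) pl_le = (\<lambda>p. Some {(p, Suc p)}) ` {..<n}"
proof
  let ?L = "priority_lattice n"
  have bot: "Some {} \<in> ?L"
    by (simp add: Some_in_priority_lattice_iff priority_forest_empty)
  have edge: "Some {(p, Suc p)} \<in> ?L" if "p < n" for p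
    using that by (simp add: Some_in_priority_lattice_iff priority_forest_single_edge)
  show "atoms ?L pl_le \<subseteq> (\<lambda>p. Some {(p, Suc p)}) ` {..<n}"
  proof
    fix a assume "a \<in> atoms ?L pl_le"
    then obtain b where "a \<in> ?L" "b \<in> ?L" "b \<noteq> a" "pl_le b a"
      and below_a: "\<And>c. c \<in> ?L \<Longrightarrow> pl_le c a \<Longrightarrow> c = a \<or> c = b"
      unfolding atoms_def by blast
    show "a \<in> (\<lambda>p. Some {(p, Suc p)}) ` {..<n}"
    proof (cases a)
      case None
      \<comment> \<open>the top lies above both {} and {(0, 1)}; for n = 0 it would be an atom\<close>
      then show ?thesis using below_a[OF bot] below_a[OF edge[OF assms]] by auto
    next
      case (Some F)
      then have "F \<noteq> {}" using below_a[OF \<open>b \<in> ?L\<close>] \<open>pl_le b a\<close> \<open>b \<noteq> a\<close> by (cases b) auto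
      moreover have "priority_forest n F"
        using \<open>a \<in> ?L\<close> Some by (simp add: Some_in_priority_lattice_iff)
      ultimately obtain p where "p < n" "(p, Suc p) \<in> F"
        using priority_forest_consecutive_edge by blast
      then show ?thesis
        using below_a[OF bot] below_a[OF edge[OF \<open>p < n\<close>]] Some \<open>F \<noteq> {}\<close> by auto
    qed
  qed
  show "(\<lambda>p. Some {(p, Suc p)}) ` {..<n} \<subseteq> atoms ?L pl_le"
  proof clarify
    fix p assume "p < n"
    have "c = Some {(p, Suc p)} \<or> c = Some {}" if "pl_le c (Some {(p, Suc p)})" for c
      using that by (cases c) (auto simp: subset_singleton_iff)
    then show "Some {(p, Suc p)} \<in> atoms ?L pl_le"
      unfolding atoms_def using edge[OF \<open>p < n\<close>] bot by (auto intro!: bexI[of _ "Some {}"])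
  qed
qed

definition parent_tree :: "nat \<Rightarrow> (nat \<Rightarrow> nat) \<Rightarrow> (nat \<times> nat) set" where
  "parent_tree n f = {(f c, c) | c. c \<in> {1..n}}"

lemma pf_conn_parent_tree:
  assumes "\<forall>c\<in>{1..n}. f c < c" and "x \<le> n" and "y \<le> n"
  shows "pf_conn (parent_tree n f) x y"
proof -
  have root: "pf_conn (parent_tree n f) 0 x" if "x \<le> n" for x
    using that
  proof (induction x rule: less_induct)
    case (less x)
    show ?case
    proof (cases "x = 0")
      case True
      then show ?thesis unfolding pf_conn_def by simp
    next
      case False
      then have "x \<in> {1..n}" using less.prems by auto
      then have "pf_conn (parent_tree n f) 0 (f x)" and "(f x, x) \<in> parent_tree n f"
        using less assms(1) unfolding parent_tree_def by auto
      then show ?thesis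
        unfolding pf_conn_def by (meson UnI1 rtrancl.rtrancl_into_rtrancl)
    qed
  qed
  show ?thesis
    using pf_conn_trans[OF pf_conn_sym[OF root[OF \<open>x \<le> n\<close>]] root[OF \<open>y \<le> n\<close>]] .
qed

lemma priority_forest_parent_tree:
  assumes "\<forall>c\<in>{1..n}. f c < c"
  shows "priority_forest n (parent_tree n f)"
  unfolding priority_forest_def
proof (intro conjI)
  show "parent_tree n f \<subseteq> {0..n} \<times> {0..n}" and "\<forall>(p, c) \<in> parent_tree n f. p < c"
    using assms unfolding parent_tree_def by fastforce+
  show "\<forall>p p' c. (p, c) \<in> parent_tree n f \<and> (p', c) \<in> parent_tree n f \<longrightarrow> p = p'"
    unfolding parent_tree_def by auto
qed (use pf_conn_parent_tree[OF assms] in auto)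

lemma priority_forest_above_parent_tree:
  assumes "priority_forest n F" and "parent_tree n f \<subseteq> F"
  shows "F = parent_tree n f"
proof
  show "F \<subseteq> parent_tree n f"
  proof clarify
    fix p c assume "(p, c) \<in> F"
    moreover have "c \<in> {1..n}"
      using \<open>(p, c) \<in> F\<close> priority_forest_increasing[OF assms(1)]
        priority_forest_bounded[OF assms(1)] by fastforce
    moreover from this have "(f c, c) \<in> F"
      using assms(2) unfolding parent_tree_def by auto
    ultimately show "(p, c) \<in> parent_tree n f"
      using priority_forest_unique_parent[OF assms(1)] unfolding parent_tree_def by blast
  qed
qed (rule assms(2))

lemma parent_tree_coatom:
  assumes "\<forall>c\<in>{1..n}. f c < c"
  shows "Some (parent_tree n f) \<in> coatoms (priority_lattice n) pl_le"
proof -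
  have "Some (parent_tree n f) \<in> priority_lattice n"
    using priority_forest_parent_tree[OF assms] by (simp add: Some_in_priority_lattice_iff)
  moreover have "c = Some (parent_tree n f) \<or> c = None"
    if "c \<in> priority_lattice n" "pl_le (Some (parent_tree n f)) c" for c
    using that priority_forest_above_parent_tree
    by (cases c) (auto simp: Some_in_priority_lattice_iff)
  ultimately show ?thesis
    unfolding coatoms_def atoms_def using None_in_priority_lattice
    by (auto intro!: bexI[of _ None])
qed

lemma card_parent_trees:
  "card (parent_tree n ` (\<Pi>\<^sub>E c\<in>{1..n}. {..<c})) = fact n"
proof -
  have "inj_on (parent_tree n) (\<Pi>\<^sub>E c\<in>{1..n}. {..<c})"
  proof (rule inj_onI)
    fix f g assume "f \<in> (\<Pi>\<^sub>E c\<in>{1..n}. {..<c})" "g \<in> (\<Pi>\<^sub>E c\<in>{1..n}. {..<c})"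
      and "parent_tree n f = parent_tree n g"
    then show "f = g"
      unfolding parent_tree_def by (intro PiE_ext) auto
  qed
  then have "card (parent_tree n ` (\<Pi>\<^sub>E c\<in>{1..n}. {..<c})) = (\<Prod>c\<in>{1..n}. card {..<c})"
    by (simp add: card_image card_PiE)
  also have "\<dots> = fact n"
    by (simp add: fact_prod)
  finally show ?thesis .
qed

lemma less_fact: "3 \<le> n \<Longrightarrow> n < fact n"
proof (induction n rule: dec_induct)
  case base
  then show ?case by (simp add: numeral_3_eq_3)
next
  case (step m)
  then have "0 < m * fact m" by simp
  then show ?case using step.IH by (simp only: fact_Suc of_nat_id mult_Suc)
qed

theorem corollary5p2:
  fixes n :: nat
  assumes "n \<ge> 3"
  shows "\<not> pl_self_dual n"
proof
  let ?L = "priority_lattice n"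
  let ?trees = "Some ` parent_tree n ` (\<Pi>\<^sub>E c\<in>{1..n}. {..<c})"
  assume "pl_self_dual n"
  then obtain \<phi> where "bij_betw \<phi> ?L ?L"
    and "\<forall>x\<in>?L. \<forall>y\<in>?L. pl_le x y \<longleftrightarrow> pl_le (\<phi> y) (\<phi> x)"
    unfolding pl_self_dual_def by blast
  then have bij: "bij_betw \<phi> (coatoms ?L pl_le) (atoms ?L pl_le)"
    by (rule bij_betw_coatoms_atoms)
  have atoms: "atoms ?L pl_le = (\<lambda>p. Some {(p, Suc p)}) ` {..<n}"
    using assms by (intro atoms_priority_lattice) simp
  have "fact n = card ?trees"
    using card_parent_trees by (simp add: card_image)
  also have "\<dots> \<le> card (coatoms ?L pl_le)"
  proof (rule card_mono)
    show "finite (coatoms ?L pl_le)"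
      using bij_betw_finite[OF bij] atoms by simp
    show "?trees \<subseteq> coatoms ?L pl_le"
      by (auto intro!: parent_tree_coatom simp: PiE_iff)
  qed
  also have "\<dots> = n"
    using bij_betw_same_card[OF bij] atoms by (simp add: card_image inj_on_def)
  finally show False using less_fact[OF assms] by simp
qed

end
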